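(* Let $\mathbf A$ and $\mathbf B$ be independent $d\times d$ random matrices that are both determinant preserving. Then (1) $\mathbf A+\mathbf B$ is determinant preserving, and (2) $\mathbf A\mathbf B$ is determinant preserving.
   Context: A random $d\times d$ matrix $\mathbf A$ is called determinant preserving (d.p.) if $\mathbb E[\det(\mathbf A_{\mathcal I,\mathcal J})]=\det(\mathbb E[\mathbf A_{\mathcal I,\mathcal J}])$ for all $\mathcal I,\mathcal J\subseteq\{1,\dots,d\}$ with $|\mathcal I|=|\mathcal J|$, where $\mathbf A_{\mathcal I,\mathcal J}$ is the submatrix with rows indexed by $\mathcal I$ and columns by $\mathcal J$ (all expectations assumed finite). *)

theory Defs
  imports "HOL-Probability.Probability"
begin

text \<open>Meaningful when card I = card J.\<close>
definition minor_det :: "real^'d::{finite,linorder}^'d::{finite,linorder} \<Rightarrow> ('d::{finite,linorder}) set \<Rightarrow> ('d::{finite,linorder}) set \<Rightarrow> real" where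
  "minor_det X I J =
     (let rs = sorted_list_of_set I; cs = sorted_list_of_set J; k = card I in
      \<Sum>p\<in>{p. p permutes {..<k}}. of_int (sign p) * (\<Prod>i<k. X $ (rs ! i) $ (cs ! p i)))"

definition mat_expectation :: "'w measure \<Rightarrow> ('w \<Rightarrow> real^'d^'d) \<Rightarrow> real^'d^'d" where
  "mat_expectation M A = (\<chi> i j. integral\<^sup>L M (\<lambda>\<omega>. A \<omega> $ i $ j))"

definition det_preserving :: "'w measure \<Rightarrow> ('w \<Rightarrow> real^'d::{finite,linorder}^'d::{finite,linorder}) \<Rightarrow> bool" where
  "det_preserving M A \<longleftrightarrow>
     (\<forall>I J :: 'd set. card I = card J \<longrightarrow>
        integrable M (\<lambda>\<omega>. minor_det (A \<omega>) I J) \<and>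
        integral\<^sup>L M (\<lambda>\<omega>. minor_det (A \<omega>) I J) = minor_det (mat_expectation M A) I J)"

end

theory Submission
  imports Defs
begin

text \<open>Every minor is a Leibniz sum over bijections between its row and column index sets.
  Expanding the products of entries of \<open>A + B\<close> and grouping the terms by the rows \<open>S\<close> that take
  their entry from \<open>A\<close> and the columns \<open>T\<close> they are matched with writes \<open>det (A + B)[I,J]\<close> as a
  signed sum of products \<open>det A[S,T] * det B[I - S, J - T]\<close>; for \<open>A B\<close> the Cauchy--Binet formula
  writes \<open>det (A B)[I,J]\<close> as the sum over \<open>K\<close> of \<open>det A[I,K] * det B[K,J]\<close>. Every summand is a
  product of a minor of \<open>A\<close> and a minor of \<open>B\<close>, so independence and determinant preservation
  turn its expectation into the same product of minors of \<open>E A\<close> and \<open>E B\<close>. Since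
  \<open>E (A + B) = E A + E B\<close> and, by independence, \<open>E (A B) = E A E B\<close>, the same expansions applied
  to the expected matrices give the claim.\<close>

section \<open>Inversion signs\<close>

definition pair_sign :: "'a::linorder \<Rightarrow> 'a \<Rightarrow> real" where
  "pair_sign a b = (if a < b then 1 else -1)"

definition ordered_pairs :: "'a::linorder set \<Rightarrow> ('a \<times> 'a) set" where
  "ordered_pairs I = {(i, j). i \<in> I \<and> j \<in> I \<and> i < j}"

text \<open>For injective \<open>f\<close> this is \<open>(-1)\<close> raised to the number of inversions of \<open>f\<close> on \<open>I\<close>; it serves
  as the sign of a bijection between two ordered index sets.\<close>
definition inversion_sign :: "'a::linorder set \<Rightarrow> ('a \<Rightarrow> 'b::linorder) \<Rightarrow> real" where
  "inversion_sign I f = (\<Prod>p\<in>ordered_pairs I. pair_sign (f (fst p)) (f (snd p)))"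

lemma finite_ordered_pairs: "finite I \<Longrightarrow> finite (ordered_pairs I)"
  unfolding ordered_pairs_def by (rule finite_subset[of _ "I \<times> I"]) auto

lemma pair_sign_swap: "a \<noteq> b \<Longrightarrow> pair_sign b a = - pair_sign a b"
  by (auto simp: pair_sign_def)

lemma pair_sign_square: "pair_sign a b * pair_sign a b = 1"
  by (auto simp: pair_sign_def)

lemma inversion_sign_cong: "(\<And>x. x \<in> I \<Longrightarrow> f x = g x) \<Longrightarrow> inversion_sign I f = inversion_sign I g"
  unfolding inversion_sign_def ordered_pairs_def by (intro prod.cong) auto

lemma inversion_sign_strict_mono:
  "(\<And>x y. x \<in> I \<Longrightarrow> y \<in> I \<Longrightarrow> x < y \<Longrightarrow> f x < f y) \<Longrightarrow> inversion_sign I f = 1"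
  unfolding inversion_sign_def ordered_pairs_def by (intro prod.neutral) (auto simp: pair_sign_def)

lemma prod_ordered_pairs_inj_on:
  assumes g: "inj_on g I"
    and sym: "\<And>a b. a \<in> g ` I \<Longrightarrow> b \<in> g ` I \<Longrightarrow> a \<noteq> b \<Longrightarrow> \<tau> a b = \<tau> b a"
  shows "(\<Prod>p\<in>ordered_pairs I. \<tau> (g (fst p)) (g (snd p))) = (\<Prod>q\<in>ordered_pairs (g ` I). \<tau> (fst q) (snd q))"
proof -
  define gi where "gi = the_inv_into I g"
  have gi_g: "gi (g x) = x" if "x \<in> I" for x using that g by (simp add: gi_def the_inv_into_f_f)
  have g_gi: "g (gi y) = y" "gi y \<in> I" if "y \<in> g ` I" for y using that g gi_g by auto
  define \<phi> where "\<phi> p = (min (g (fst p)) (g (snd p)), max (g (fst p)) (g (snd p)))" for p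
  define \<psi> where "\<psi> q = (min (gi (fst q)) (gi (snd q)), max (gi (fst q)) (gi (snd q)))" for q
  have \<phi>: "\<psi> (\<phi> p) = p \<and> \<phi> p \<in> ordered_pairs (g ` I) \<and> \<tau> (fst (\<phi> p)) (snd (\<phi> p)) = \<tau> (g (fst p)) (g (snd p))"
    if p: "p \<in> ordered_pairs I" for p
  proof -
    obtain a b where ab: "p = (a, b)" "a \<in> I" "b \<in> I" "a < b"
      using p by (auto simp: ordered_pairs_def)
    have "g a \<noteq> g b" using g ab by (auto dest: inj_onD)
    then consider "g a < g b" | "g b < g a" by (rule neqE)
    then show ?thesis
      by cases (use ab gi_g sym[of "g a" "g b"] in \<open>auto simp: \<phi>_def \<psi>_def ordered_pairs_def\<close>)
  qed
  have \<psi>: "\<phi> (\<psi> q) = q \<and> \<psi> q \<in> ordered_pairs I" if q: "q \<in> ordered_pairs (g ` I)" for q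
  proof -
    obtain a b where ab: "q = (a, b)" "a \<in> g ` I" "b \<in> g ` I" "a < b"
      using q by (auto simp: ordered_pairs_def)
    note ga = g_gi[OF ab(2)] and gb = g_gi[OF ab(3)]
    have "gi a \<noteq> gi b" using ga gb ab(4) by (metis less_irrefl)
    then consider "gi a < gi b" | "gi b < gi a" by (rule neqE)
    then show ?thesis
      by cases (use ab ga gb in \<open>auto simp: \<phi>_def \<psi>_def ordered_pairs_def\<close>)
  qed
  show ?thesis
    by (rule prod.reindex_bij_witness[of _ \<psi> \<phi>]) (use \<phi> \<psi> in auto)
qed

lemma inversion_sign_comp:
  assumes g: "inj_on g I" and h: "inj_on h (g ` I)"
  shows "inversion_sign I (h \<circ> g) = inversion_sign I g * inversion_sign (g ` I) h"
proof -
  define \<tau> where "\<tau> a b = pair_sign a b * pair_sign (h a) (h b)" for a b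
  have \<tau>_sym: "\<tau> a b = \<tau> b a" if "a \<in> g ` I" "b \<in> g ` I" "a \<noteq> b" for a b
  proof -
    have "h a \<noteq> h b" using h that by (auto dest: inj_onD)
    then show ?thesis using that pair_sign_swap[of a b] pair_sign_swap[of "h a" "h b"] by (simp add: \<tau>_def)
  qed
  have "inversion_sign I (h \<circ> g) =
      (\<Prod>p\<in>ordered_pairs I. pair_sign (g (fst p)) (g (snd p)) * \<tau> (g (fst p)) (g (snd p)))"
    unfolding inversion_sign_def \<tau>_def
    by (intro prod.cong refl) (simp add: mult.assoc[symmetric] pair_sign_square)
  also have "\<dots> = inversion_sign I g * (\<Prod>q\<in>ordered_pairs (g ` I). \<tau> (fst q) (snd q))"
    unfolding prod.distrib inversion_sign_def
    using prod_ordered_pairs_inj_on[where \<tau> = \<tau>, OF g \<tau>_sym] by simp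
  also have "(\<Prod>q\<in>ordered_pairs (g ` I). \<tau> (fst q) (snd q)) = inversion_sign (g ` I) h"
    unfolding inversion_sign_def \<tau>_def
    by (intro prod.cong refl) (auto simp: ordered_pairs_def pair_sign_def)
  finally show ?thesis .
qed

lemma inversion_sign_comp_permutes:
  assumes "q permutes A" "inj_on t A"
  shows "inversion_sign A (t \<circ> q) = inversion_sign A q * inversion_sign A t"
  using inversion_sign_comp[of q A t] assms permutes_image[OF assms(1)] permutes_inj_on[OF assms(1)]
  by simp

lemma inversion_sign_adjacent_transpose:
  assumes "Suc x < k"
  shows "inversion_sign {..<k} (Transposition.transpose x (Suc x)) = -1"
proof -
  let ?h = "\<lambda>p. pair_sign (Transposition.transpose x (Suc x) (fst p)) (Transposition.transpose x (Suc x) (snd p))"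
  have mem: "(x, Suc x) \<in> ordered_pairs {..<k}" using assms by (auto simp: ordered_pairs_def)
  have "inversion_sign {..<k} (Transposition.transpose x (Suc x)) =
      ?h (x, Suc x) * prod ?h (ordered_pairs {..<k} - {(x, Suc x)})"
    unfolding inversion_sign_def by (rule prod.remove[OF finite_ordered_pairs mem]) simp
  also have "prod ?h (ordered_pairs {..<k} - {(x, Suc x)}) = 1"
    by (intro prod.neutral) (auto simp: ordered_pairs_def pair_sign_def Transposition.transpose_def)
  finally show ?thesis by (simp add: pair_sign_def)
qed

lemma inversion_sign_apply_adj_transps:
  assumes "\<forall>x\<in>set xs. Suc x < k"
  shows "inversion_sign {..<k} (apply_adj_transps xs) = (-1) ^ length xs"
  using assms
proof (induction xs)
  case Nil
  then show ?case by (simp add: inversion_sign_strict_mono)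
next
  case (Cons x xs)
  have "apply_adj_transps xs permutes {..<k}"
    using Cons.prems by (intro permutes_apply_adj_transps) auto
  then have "inversion_sign {..<k} (Transposition.transpose x (Suc x) \<circ> apply_adj_transps xs) =
      inversion_sign {..<k} (apply_adj_transps xs) * inversion_sign {..<k} (Transposition.transpose x (Suc x))"
    by (rule inversion_sign_comp_permutes) auto
  also have "\<dots> = (-1) ^ length (x # xs)"
    using Cons inversion_sign_adjacent_transpose[of x k] by simp
  finally show ?case by (simp only: apply_adj_transps_Cons Suc_eq_plus1)
qed

lemma inversion_sign_transpose_lessThan:
  fixes a b k :: nat
  assumes "a < k" "b < k" "a \<noteq> b"
  shows "inversion_sign {..<k} (Transposition.transpose a b) = -1"
proof -
  have *: "inversion_sign {..<k} (Transposition.transpose a b) = -1" if "a < b" "b < k" for a b :: nat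
  proof -
    have "odd (2 * (b - a) - 1)" using that by presburger
    moreover have "Transposition.transpose a b = apply_adj_transps (adj_transp_seq a b)"
      using that by (simp add: adj_transp_seq_correct)
    ultimately show ?thesis
      using that by (simp add: inversion_sign_apply_adj_transps set_adj_transp_seq length_adj_transp_seq)
  qed
  show ?thesis
    using assms *[of a b] *[of b a] by (cases "a < b") (auto simp: transpose_commute)
qed

lemma sign_eq_inversion_sign:
  fixes k :: nat
  assumes "p permutes {..<k}"
  shows "of_int (sign p) = inversion_sign {..<k} p"
  using assms finite_lessThan[of k]
proof (induction rule: permutes_induct)
  case id
  then show ?case by (simp add: inversion_sign_strict_mono)
next
  case (swap a b p)
  have "inversion_sign {..<k} (Transposition.transpose a b \<circ> p) =
      inversion_sign {..<k} p * inversion_sign {..<k} (Transposition.transpose a b)"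
    by (rule inversion_sign_comp_permutes[OF swap.hyps(4)]) auto
  also have "\<dots> = - inversion_sign {..<k} p"
    using inversion_sign_transpose_lessThan[of a k b] swap.hyps by simp
  moreover have "sign (Transposition.transpose a b \<circ> p) = - sign p"
    using swap.hyps by (simp add: sign_compose permutation_swap_id sign_swap_id
        permutes_imp_permutation[OF _ swap.hyps(4)])
  ultimately show ?case using swap.IH by (metis of_int_minus)
qed

definition nth_of_set :: "'a::linorder set \<Rightarrow> nat \<Rightarrow> 'a" where
  "nth_of_set I i = sorted_list_of_set I ! i"

definition rank_in_set :: "'a::linorder set \<Rightarrow> 'a \<Rightarrow> nat" where
  "rank_in_set I = the_inv_into {..<card I} (nth_of_set I)"

lemma bij_betw_nth_of_set:
  assumes "finite I"
  shows "bij_betw (nth_of_set I) {..<card I} I"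
proof -
  have "distinct (sorted_list_of_set I)" "length (sorted_list_of_set I) = card I"
    "set (sorted_list_of_set I) = I"
    using assms by auto
  then show ?thesis
    by (auto simp: bij_betw_def inj_on_def nth_of_set_def nth_eq_iff_index_eq set_conv_nth)
qed

lemma nth_of_set_strict_mono: "i < j \<Longrightarrow> j < card I \<Longrightarrow> nth_of_set I i < nth_of_set I j"
  unfolding nth_of_set_def
  using sorted_wrt_nth_less[OF strict_sorted_list_of_set] by (metis length_sorted_list_of_set)

lemma nth_of_set_in: "finite I \<Longrightarrow> i < card I \<Longrightarrow> nth_of_set I i \<in> I"
  using bij_betw_nth_of_set bij_betwE by blast

lemma bij_betw_rank_in_set: "finite I \<Longrightarrow> bij_betw (rank_in_set I) I {..<card I}"
  unfolding rank_in_set_def by (rule bij_betw_the_inv_into[OF bij_betw_nth_of_set])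

lemma nth_of_set_rank: "finite I \<Longrightarrow> x \<in> I \<Longrightarrow> nth_of_set I (rank_in_set I x) = x"
  unfolding rank_in_set_def using bij_betw_nth_of_set by (metis bij_betw_def f_the_inv_into_f)

lemma rank_nth_of_set: "finite I \<Longrightarrow> i < card I \<Longrightarrow> rank_in_set I (nth_of_set I i) = i"
  unfolding rank_in_set_def using bij_betw_nth_of_set by (metis bij_betw_def lessThan_iff the_inv_into_f_f)

lemma rank_in_set_less: "finite I \<Longrightarrow> x \<in> I \<Longrightarrow> rank_in_set I x < card I"
  using bij_betw_rank_in_set bij_betwE by fastforce

lemma rank_in_set_strict_mono:
  assumes "finite I" "x \<in> I" "y \<in> I" "x < y"
  shows "rank_in_set I x < rank_in_set I y"
proof (rule ccontr)
  assume "\<not> rank_in_set I x < rank_in_set I y"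
  moreover have "rank_in_set I x \<noteq> rank_in_set I y"
    using assms nth_of_set_rank by (metis less_irrefl)
  ultimately have "nth_of_set I (rank_in_set I y) < nth_of_set I (rank_in_set I x)"
    using nth_of_set_strict_mono rank_in_set_less[OF assms(1,2)] by (simp add: linorder_neq_iff)
  then show False using assms by (simp add: nth_of_set_rank)
qed

text \<open>\<open>nth_of_set\<close> and \<open>rank_in_set\<close> are order isomorphisms, so they contribute no inversions.\<close>
lemma inversion_sign_transfer:
  assumes fin: "finite I" "finite J" and c: "card J = card I" and q: "q permutes {..<card I}"
  shows "inversion_sign I (nth_of_set J \<circ> (q \<circ> rank_in_set I)) = inversion_sign {..<card I} q"
proof -
  have rank_img: "rank_in_set I ` I = {..<card I}" and rank_inj: "inj_on (rank_in_set I) I"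
    using bij_betw_rank_in_set[OF fin(1)] by (auto simp: bij_betw_def)
  have q_img: "q ` {..<card I} = {..<card I}" and q_inj: "inj_on q {..<card I}"
    using q by (auto simp: permutes_image permutes_inj_on)
  have img: "(q \<circ> rank_in_set I) ` I = {..<card I}" using rank_img q_img by (metis image_comp)
  have inj: "inj_on (q \<circ> rank_in_set I) I" using rank_inj q_inj rank_img by (simp add: comp_inj_on)
  have nth_inj: "inj_on (nth_of_set J) {..<card I}"
    using bij_betw_nth_of_set[OF fin(2)] c by (simp add: bij_betw_def)
  have "inversion_sign I (nth_of_set J \<circ> (q \<circ> rank_in_set I)) =
      inversion_sign I (q \<circ> rank_in_set I) * inversion_sign {..<card I} (nth_of_set J)"
    using inversion_sign_comp[OF inj] nth_inj img by simp
  also have "inversion_sign {..<card I} (nth_of_set J) = 1"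
    by (rule inversion_sign_strict_mono) (use nth_of_set_strict_mono[of _ _ J] c in auto)
  also have "inversion_sign I (q \<circ> rank_in_set I) =
      inversion_sign I (rank_in_set I) * inversion_sign {..<card I} q"
    using inversion_sign_comp[OF rank_inj] rank_img q_inj by simp
  also have "inversion_sign I (rank_in_set I) = 1"
    by (rule inversion_sign_strict_mono) (use rank_in_set_strict_mono[OF fin(1)] in auto)
  finally show ?thesis by (simp add: comp_def)
qed

lemma inversion_sign_transpose:
  assumes fin: "finite I" and ij: "i \<in> I" "j \<in> I" "i \<noteq> j"
  shows "inversion_sign I (Transposition.transpose i j) = -1"
proof -
  let ?a = "rank_in_set I i" and ?b = "rank_in_set I j"
  have ab: "?a < card I" "?b < card I" "?a \<noteq> ?b"
    using rank_in_set_less[OF fin] ij nth_of_set_rank[OF fin] by metis+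
  have "inversion_sign I (Transposition.transpose i j) =
      inversion_sign I (nth_of_set I \<circ> (Transposition.transpose ?a ?b \<circ> rank_in_set I))"
    using nth_of_set_rank[OF fin] rank_in_set_less[OF fin] ij
    by (intro inversion_sign_cong) (auto simp: Transposition.transpose_def, metis+)
  also have "\<dots> = inversion_sign {..<card I} (Transposition.transpose ?a ?b)"
    by (rule inversion_sign_transfer[OF fin fin refl]) (simp add: ab permutes_swap_id)
  also have "\<dots> = -1" by (rule inversion_sign_transpose_lessThan[OF ab])
  finally show ?thesis .
qed

section \<open>Block determinants as sums over bijections\<close>

definition bijections :: "'a set \<Rightarrow> 'b set \<Rightarrow> ('a \<Rightarrow> 'b) set" where
  "bijections I J = {f. bij_betw f I J \<and> f \<in> extensional I}"

definition leibniz_det :: "('a::linorder \<Rightarrow> 'b::linorder \<Rightarrow> real) \<Rightarrow> 'a set \<Rightarrow> 'b set \<Rightarrow> real" where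
  "leibniz_det F I J = (\<Sum>f\<in>bijections I J. inversion_sign I f * (\<Prod>i\<in>I. F i (f i)))"

lemma finite_bijections:
  assumes "finite I" "finite J"
  shows "finite (bijections I J)"
proof (rule finite_subset)
  show "bijections I J \<subseteq> PiE I (\<lambda>_. J)"
    by (auto simp: bijections_def bij_betw_def PiE_def Pi_def)
qed (simp add: finite_PiE assms)

definition bijection_of_perm :: "'a::linorder set \<Rightarrow> 'b::linorder set \<Rightarrow> (nat \<Rightarrow> nat) \<Rightarrow> 'a \<Rightarrow> 'b" where
  "bijection_of_perm I J p = restrict (nth_of_set J \<circ> p \<circ> rank_in_set I) I"

lemma bijection_of_perm_in_bijections:
  assumes fin: "finite I" "finite J" and c: "card J = card I" and p: "p permutes {..<card I}"
  shows "bijection_of_perm I J p \<in> bijections I J"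
proof -
  have "bij_betw (nth_of_set J \<circ> p \<circ> rank_in_set I) I J"
    using bij_betw_trans[OF bij_betw_trans[OF bij_betw_rank_in_set[OF fin(1)] permutes_imp_bij[OF p]]]
      bij_betw_nth_of_set[OF fin(2)] c
    by (simp add: comp_assoc)
  moreover have "bij_betw (bijection_of_perm I J p) I J \<longleftrightarrow> bij_betw (nth_of_set J \<circ> p \<circ> rank_in_set I) I J"
    unfolding bijection_of_perm_def by (rule bij_betw_cong) simp
  ultimately show ?thesis
    by (simp add: bijections_def bijection_of_perm_def)
qed

lemma inversion_sign_bijection_of_perm:
  assumes fin: "finite I" "finite J" and c: "card J = card I" and p: "p permutes {..<card I}"
  shows "inversion_sign I (bijection_of_perm I J p) = of_int (sign p)"
proof -
  have "inversion_sign I (bijection_of_perm I J p) = inversion_sign I (nth_of_set J \<circ> (p \<circ> rank_in_set I))"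
    by (rule inversion_sign_cong) (simp add: bijection_of_perm_def)
  also have "\<dots> = of_int (sign p)"
    using inversion_sign_transfer[OF fin c p] sign_eq_inversion_sign[OF p] by simp
  finally show ?thesis .
qed

lemma bij_betw_bijection_of_perm:
  assumes fin: "finite I" "finite J" and c: "card J = card I"
  shows "bij_betw (bijection_of_perm I J) {p. p permutes {..<card I}} (bijections I J)"
proof -
  define perm_of where
    "perm_of f i = (if i < card I then rank_in_set J (f (nth_of_set I i)) else i)" for f :: "'a \<Rightarrow> 'b" and i
  have perm_of: "perm_of (bijection_of_perm I J p) = p" if p: "p permutes {..<card I}" for p
  proof
    fix i
    have "p i < card I" if "i < card I" using permutes_in_image[OF p] that by simp
    then show "perm_of (bijection_of_perm I J p) i = p i"
      using nth_of_set_in[OF fin(1)] rank_nth_of_set[OF fin(1)] rank_nth_of_set[OF fin(2)] c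
        permutes_not_in[OF p]
      by (auto simp: perm_of_def bijection_of_perm_def)
  qed
  have of_perm_of: "bijection_of_perm I J (perm_of f) = f" if f: "f \<in> bijections I J" for f
  proof
    fix x
    show "bijection_of_perm I J (perm_of f) x = f x"
      using f bij_betwE[of f I J] rank_in_set_less[OF fin(1)] nth_of_set_rank[OF fin(1)]
        nth_of_set_rank[OF fin(2)]
      by (cases "x \<in> I") (auto simp: bijection_of_perm_def perm_of_def bijections_def extensional_def)
  qed
  have perm_of_permutes: "perm_of f permutes {..<card I}" if f: "f \<in> bijections I J" for f
  proof -
    have "bij_betw (rank_in_set J \<circ> f \<circ> nth_of_set I) {..<card I} {..<card I}"
      using bij_betw_nth_of_set[OF fin(1)] f bij_betw_rank_in_set[OF fin(2)] c
      by (auto simp: bijections_def intro: bij_betw_trans)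
    then have "bij_betw (perm_of f) {..<card I} {..<card I}"
      by (rule bij_betw_cong[THEN iffD1, rotated]) (simp add: perm_of_def)
    then show ?thesis
      by (rule bij_imp_permutes) (simp add: perm_of_def)
  qed
  show ?thesis
    by (rule bij_betw_byWitness[where f' = perm_of])
      (use perm_of of_perm_of perm_of_permutes bijection_of_perm_in_bijections[OF fin c] in auto)
qed

lemma minor_det_eq_leibniz_det:
  fixes X :: "real^'d::{finite,linorder}^'d::{finite,linorder}"
  assumes c: "card I = card J"
  shows "minor_det X I J = leibniz_det (\<lambda>i j. X $ i $ j) I J"
proof -
  have fin: "finite I" "finite J" by auto
  have summand: "of_int (sign p) * (\<Prod>i<card I. X $ nth_of_set I i $ nth_of_set J (p i)) =
      inversion_sign I (bijection_of_perm I J p) * (\<Prod>i\<in>I. X $ i $ bijection_of_perm I J p i)"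
    if p: "p permutes {..<card I}" for p
  proof -
    have "(\<Prod>i\<in>I. X $ i $ bijection_of_perm I J p i) =
        (\<Prod>i<card I. X $ nth_of_set I i $ bijection_of_perm I J p (nth_of_set I i))"
      by (rule prod.reindex_bij_betw[OF bij_betw_nth_of_set[OF fin(1)], symmetric])
    also have "\<dots> = (\<Prod>i<card I. X $ nth_of_set I i $ nth_of_set J (p i))"
      by (intro prod.cong refl)
        (simp add: bijection_of_perm_def nth_of_set_in[OF fin(1)] rank_nth_of_set[OF fin(1)])
    finally show ?thesis
      using inversion_sign_bijection_of_perm[OF fin c[symmetric] p] by simp
  qed
  have "minor_det X I J =
      (\<Sum>p\<in>{p. p permutes {..<card I}}. of_int (sign p) * (\<Prod>i<card I. X $ nth_of_set I i $ nth_of_set J (p i)))"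
    by (simp add: minor_det_def nth_of_set_def Let_def)
  also have "\<dots> = (\<Sum>p\<in>{p. p permutes {..<card I}}.
      inversion_sign I (bijection_of_perm I J p) * (\<Prod>i\<in>I. X $ i $ bijection_of_perm I J p i))"
    by (rule sum.cong) (simp_all add: summand)
  also have "\<dots> = leibniz_det (\<lambda>i j. X $ i $ j) I J"
    unfolding leibniz_det_def
    by (rule sum.reindex_bij_betw[OF bij_betw_bijection_of_perm[OF fin c[symmetric]]])
  finally show ?thesis .
qed

section \<open>Expansion of the determinant of a sum\<close>

text \<open>\<open>split_sign I S\<close> is the sign of the shuffle of \<open>I\<close> that lists \<open>S\<close> before \<open>I - S\<close>.\<close>
definition split_sign :: "'a::linorder set \<Rightarrow> 'a set \<Rightarrow> real" where
  "split_sign I S = (\<Prod>p\<in>S \<times> (I - S). pair_sign (fst p) (snd p))"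

lemma prod_ordered_pairs_split:
  assumes fin: "finite I" and S: "S \<subseteq> I"
  shows "(\<Prod>p\<in>ordered_pairs I. h (fst p) (snd p)) =
    (\<Prod>p\<in>ordered_pairs S. h (fst p) (snd p)) * (\<Prod>p\<in>ordered_pairs (I - S). h (fst p) (snd p)) *
    (\<Prod>p\<in>S \<times> (I - S). h (min (fst p) (snd p)) (max (fst p) (snd p)))"
proof -
  define C where "C = {p \<in> ordered_pairs I. (fst p \<in> S) \<noteq> (snd p \<in> S)}"
  have fin_C: "finite C" using finite_ordered_pairs[OF fin] by (simp add: C_def)
  have fin_S: "finite S" "finite (I - S)" using fin S finite_subset by auto
  have decomp: "ordered_pairs I = (ordered_pairs S \<union> ordered_pairs (I - S)) \<union> C"
    using S by (auto simp: ordered_pairs_def C_def)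
  have "(\<Prod>p\<in>ordered_pairs I. h (fst p) (snd p)) =
      (\<Prod>p\<in>ordered_pairs S \<union> ordered_pairs (I - S). h (fst p) (snd p)) * (\<Prod>p\<in>C. h (fst p) (snd p))"
    unfolding decomp
    by (intro prod.union_disjoint finite_UnI finite_ordered_pairs fin_S fin_C)
      (auto simp: ordered_pairs_def C_def)
  also have "(\<Prod>p\<in>ordered_pairs S \<union> ordered_pairs (I - S). h (fst p) (snd p)) =
      (\<Prod>p\<in>ordered_pairs S. h (fst p) (snd p)) * (\<Prod>p\<in>ordered_pairs (I - S). h (fst p) (snd p))"
    by (intro prod.union_disjoint finite_ordered_pairs fin_S) (auto simp: ordered_pairs_def)
  also have "(\<Prod>p\<in>C. h (fst p) (snd p)) =
      (\<Prod>p\<in>S \<times> (I - S). h (min (fst p) (snd p)) (max (fst p) (snd p)))"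
    by (rule prod.reindex_bij_witness[of _ "\<lambda>p. (min (fst p) (snd p), max (fst p) (snd p))"
          "\<lambda>p. if fst p \<in> S then p else (snd p, fst p)"])
      (use S in \<open>auto simp: C_def ordered_pairs_def min_def max_def order.order_iff_strict\<close>)
  finally show ?thesis .
qed

lemma inversion_sign_split:
  assumes fin: "finite I" and f: "bij_betw f I J" and S: "S \<subseteq> I"
  shows "inversion_sign I f =
    inversion_sign S f * inversion_sign (I - S) f * (split_sign I S * split_sign J (f ` S))"
proof -
  have f_S: "bij_betw f S (f ` S)" using bij_betw_subset[OF f S] by simp
  have f_compl: "bij_betw f (I - S) (J - f ` S)"
    using bij_betw_DiffI[OF f f_S S] S f by (auto simp: bij_betw_def)
  have cross: "pair_sign (f (min a b)) (f (max a b)) = pair_sign a b * pair_sign (f a) (f b)"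
    if "(a, b) \<in> S \<times> (I - S)" for a b
  proof -
    have "a \<noteq> b" "f a \<noteq> f b" using that f S by (auto simp: bij_betw_def dest: inj_onD)
    then show ?thesis by (auto simp: pair_sign_def min_def max_def)
  qed
  have image: "(\<Prod>p\<in>S \<times> (I - S). pair_sign (f (fst p)) (f (snd p))) = split_sign J (f ` S)"
    unfolding split_sign_def
    using prod.reindex_bij_betw[OF bij_betw_map_prod[OF f_S f_compl], of "\<lambda>p. pair_sign (fst p) (snd p)"]
    by (simp add: case_prod_beta)
  have "(\<Prod>p\<in>S \<times> (I - S). pair_sign (f (min (fst p) (snd p))) (f (max (fst p) (snd p)))) =
      (\<Prod>p\<in>S \<times> (I - S). pair_sign (fst p) (snd p) * pair_sign (f (fst p)) (f (snd p)))"
    by (intro prod.cong refl) (use cross in auto)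
  also have "\<dots> = split_sign I S * split_sign J (f ` S)"
    unfolding prod.distrib image by (simp add: split_sign_def)
  finally have "(\<Prod>p\<in>S \<times> (I - S). pair_sign (f (min (fst p) (snd p))) (f (max (fst p) (snd p)))) =
      split_sign I S * split_sign J (f ` S)" .
  then show ?thesis
    unfolding inversion_sign_def
    using prod_ordered_pairs_split[OF fin S, of "\<lambda>a b. pair_sign (f a) (f b)"] by simp
qed

lemma bij_betw_merge_bijections:
  assumes S: "S \<subseteq> I" and T: "T \<subseteq> J"
  shows "bij_betw (\<lambda>(g, h) x. if x \<in> S then g x else h x)
    (bijections S T \<times> bijections (I - S) (J - T)) {f \<in> bijections I J. f ` S = T}"
proof -
  have merge: "(\<lambda>x. if x \<in> S then g x else h x) \<in> {f \<in> bijections I J. f ` S = T}"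
    if g: "g \<in> bijections S T" and h: "h \<in> bijections (I - S) (J - T)" for g h
  proof -
    have "bij_betw (\<lambda>x. if x \<in> S then g x else h x) (S \<union> (I - S)) (T \<union> (J - T))"
      using g h by (intro bij_betw_disjoint_Un) (auto simp: bijections_def)
    moreover have "S \<union> (I - S) = I" "T \<union> (J - T) = J" using S T by auto
    ultimately show ?thesis
      using g h S by (auto simp: bijections_def bij_betw_def extensional_def)
  qed
  have split: "(restrict f S, restrict f (I - S)) \<in> bijections S T \<times> bijections (I - S) (J - T)"
    if f: "f \<in> {f \<in> bijections I J. f ` S = T}" for f
  proof -
    have "bij_betw f S T" "bij_betw f (I - S) (J - T)"
      using f bij_betw_subset[of f I J S T] bij_betw_DiffI[of f I J S T] S T by (auto simp: bijections_def)
    then show ?thesis by (auto simp: bijections_def bij_betw_def inj_on_def)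
  qed
  have restrict_merge: "(restrict (\<lambda>x. if x \<in> S then g x else h x) S,
      restrict (\<lambda>x. if x \<in> S then g x else h x) (I - S)) = (g, h)"
    if "g \<in> extensional S" "h \<in> extensional (I - S)" for g h
    using that by (auto simp: extensional_def fun_eq_iff)
  have merge_restrict: "(\<lambda>x. if x \<in> S then restrict f S x else restrict f (I - S) x) = f"
    if "f \<in> extensional I" for f
    using that S by (auto simp: extensional_def fun_eq_iff)
  show ?thesis
  proof (rule bij_betw_byWitness[where f' = "\<lambda>f. (restrict f S, restrict f (I - S))"])
    show "\<forall>q\<in>bijections S T \<times> bijections (I - S) (J - T).
        (\<lambda>f. (restrict f S, restrict f (I - S))) ((\<lambda>(g, h) x. if x \<in> S then g x else h x) q) = q"
      using restrict_merge by (auto simp: bijections_def)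
    show "\<forall>f\<in>{f \<in> bijections I J. f ` S = T}.
        (\<lambda>(g, h) x. if x \<in> S then g x else h x) ((\<lambda>f. (restrict f S, restrict f (I - S))) f) = f"
      using merge_restrict by (auto simp: bijections_def)
  qed (use merge split in fastforce)+
qed

lemma sum_bijections_image_eq:
  assumes fin: "finite I" and S: "S \<subseteq> I" and T: "T \<subseteq> J"
  shows "(\<Sum>f\<in>{f \<in> bijections I J. f ` S = T}.
      inversion_sign I f * ((\<Prod>i\<in>S. F i (f i)) * (\<Prod>i\<in>I - S. G i (f i))))
    = split_sign I S * split_sign J T * leibniz_det F S T * leibniz_det G (I - S) (J - T)"
proof -
  let ?merge = "\<lambda>(g, h) x. if x \<in> S then g x else h x"
  have summand: "inversion_sign I (?merge q) * ((\<Prod>i\<in>S. F i (?merge q i)) * (\<Prod>i\<in>I - S. G i (?merge q i)))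
      = split_sign I S * split_sign J T *
        ((inversion_sign S (fst q) * (\<Prod>i\<in>S. F i (fst q i))) *
         (inversion_sign (I - S) (snd q) * (\<Prod>i\<in>I - S. G i (snd q i))))"
    if q: "q \<in> bijections S T \<times> bijections (I - S) (J - T)" for q
  proof -
    have mem: "?merge q \<in> {f \<in> bijections I J. f ` S = T}"
      using q bij_betwE[OF bij_betw_merge_bijections[OF S T]] by blast
    have "inversion_sign I (?merge q) =
        inversion_sign S (?merge q) * inversion_sign (I - S) (?merge q) * (split_sign I S * split_sign J T)"
      using inversion_sign_split[OF fin _ S, of "?merge q" J] mem by (auto simp: bijections_def)
    also have "inversion_sign S (?merge q) = inversion_sign S (fst q)"
      by (rule inversion_sign_cong) (auto simp: case_prod_beta)
    also have "inversion_sign (I - S) (?merge q) = inversion_sign (I - S) (snd q)"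
      by (rule inversion_sign_cong) (auto simp: case_prod_beta)
    finally have sign: "inversion_sign I (?merge q) =
        inversion_sign S (fst q) * inversion_sign (I - S) (snd q) * (split_sign I S * split_sign J T)" .
    have "(\<Prod>i\<in>S. F i (?merge q i)) = (\<Prod>i\<in>S. F i (fst q i))"
      "(\<Prod>i\<in>I - S. G i (?merge q i)) = (\<Prod>i\<in>I - S. G i (snd q i))"
      by (auto simp: case_prod_beta intro!: prod.cong)
    with sign show ?thesis by (simp only: mult_ac)
  qed
  have "split_sign I S * split_sign J T * leibniz_det F S T * leibniz_det G (I - S) (J - T) =
      (\<Sum>q\<in>bijections S T \<times> bijections (I - S) (J - T). split_sign I S * split_sign J T *
        ((inversion_sign S (fst q) * (\<Prod>i\<in>S. F i (fst q i))) *
         (inversion_sign (I - S) (snd q) * (\<Prod>i\<in>I - S. G i (snd q i)))))"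
  proof -
    have "leibniz_det F S T * leibniz_det G (I - S) (J - T) =
        (\<Sum>q\<in>bijections S T \<times> bijections (I - S) (J - T).
          (inversion_sign S (fst q) * (\<Prod>i\<in>S. F i (fst q i))) *
          (inversion_sign (I - S) (snd q) * (\<Prod>i\<in>I - S. G i (snd q i))))"
      unfolding leibniz_det_def sum_product sum.cartesian_product by (simp add: case_prod_beta)
    then show ?thesis by (simp add: sum_distrib_left mult.assoc)
  qed
  also have "\<dots> = (\<Sum>q\<in>bijections S T \<times> bijections (I - S) (J - T).
      inversion_sign I (?merge q) * ((\<Prod>i\<in>S. F i (?merge q i)) * (\<Prod>i\<in>I - S. G i (?merge q i))))"
    by (rule sum.cong[OF refl summand[symmetric]])
  also have "\<dots> = (\<Sum>f\<in>{f \<in> bijections I J. f ` S = T}.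
      inversion_sign I f * ((\<Prod>i\<in>S. F i (f i)) * (\<Prod>i\<in>I - S. G i (f i))))"
    by (rule sum.reindex_bij_betw[OF bij_betw_merge_bijections[OF S T]])
  finally show ?thesis ..
qed

lemma leibniz_det_add:
  assumes fin: "finite I" "finite J"
  shows "leibniz_det (\<lambda>i j. F i j + G i j) I J =
    (\<Sum>S\<in>Pow I. \<Sum>T\<in>{T. T \<subseteq> J \<and> card T = card S}.
      split_sign I S * split_sign J T * leibniz_det F S T * leibniz_det G (I - S) (J - T))"
proof -
  let ?summand = "\<lambda>S f. inversion_sign I f * ((\<Prod>i\<in>S. F i (f i)) * (\<Prod>i\<in>I - S. G i (f i)))"
  have "leibniz_det (\<lambda>i j. F i j + G i j) I J = (\<Sum>f\<in>bijections I J. \<Sum>S\<in>Pow I. ?summand S f)"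
    unfolding leibniz_det_def by (simp add: prod_add[OF fin(1)] sum_distrib_left)
  also have "\<dots> = (\<Sum>S\<in>Pow I. \<Sum>f\<in>bijections I J. ?summand S f)"
    by (rule sum.swap)
  also have "\<dots> = (\<Sum>S\<in>Pow I. \<Sum>T\<in>{T. T \<subseteq> J \<and> card T = card S}.
      \<Sum>f\<in>{f \<in> bijections I J. f ` S = T}. ?summand S f)"
  proof (rule sum.cong[OF refl])
    fix S assume "S \<in> Pow I"
    then have "(\<lambda>f. f ` S) ` bijections I J \<subseteq> {T. T \<subseteq> J \<and> card T = card S}"
      by (auto simp: bijections_def bij_betw_def card_image inj_on_subset)
    then show "(\<Sum>f\<in>bijections I J. ?summand S f) =
        (\<Sum>T\<in>{T. T \<subseteq> J \<and> card T = card S}. \<Sum>f\<in>{f \<in> bijections I J. f ` S = T}. ?summand S f)"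
      using fin by (intro sum.group[symmetric] finite_bijections) auto
  qed
  also have "\<dots> = (\<Sum>S\<in>Pow I. \<Sum>T\<in>{T. T \<subseteq> J \<and> card T = card S}.
      split_sign I S * split_sign J T * leibniz_det F S T * leibniz_det G (I - S) (J - T))"
    using fin by (intro sum.cong refl sum_bijections_image_eq) auto
  finally show ?thesis .
qed

section \<open>The Cauchy--Binet formula\<close>

text \<open>Composing with the transposition of two rows on which \<open>g\<close> agrees is a sign-reversing
  involution on the summands.\<close>
lemma sum_bijections_not_inj_on:
  assumes fin: "finite I" and not_inj: "\<not> inj_on g I"
  shows "(\<Sum>f\<in>bijections I J. inversion_sign I f * (\<Prod>x\<in>I. G (g x) (f x))) = 0"
proof -
  obtain i j where ij: "i \<in> I" "j \<in> I" "i \<noteq> j" "g i = g j"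
    using not_inj by (auto simp: inj_on_def)
  define \<tau> where "\<tau> = Transposition.transpose i j"
  have \<tau>_bij: "bij_betw \<tau> I I" using ij by (simp add: \<tau>_def permutes_swap_id permutes_imp_bij)
  have \<tau>_out: "x \<notin> I \<Longrightarrow> \<tau> x = x" for x using ij by (auto simp: \<tau>_def Transposition.transpose_def)
  have g_\<tau>: "g (\<tau> x) = g x" for x using ij by (auto simp: \<tau>_def Transposition.transpose_def)
  have \<tau>_involution: "f \<circ> \<tau> \<circ> \<tau> = f" if "f \<in> bijections I J" for f
    by (simp add: fun_eq_iff \<tau>_def)
  let ?H = "\<lambda>f. inversion_sign I f * (\<Prod>x\<in>I. G (g x) (f x))"
  have mem: "f \<circ> \<tau> \<in> bijections I J" if "f \<in> bijections I J" for f
    using that bij_betw_trans[OF \<tau>_bij] \<tau>_out by (auto simp: bijections_def extensional_def)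
  have neg: "?H (f \<circ> \<tau>) = - ?H f" if "f \<in> bijections I J" for f
  proof -
    have f: "bij_betw f I J" using that by (simp add: bijections_def)
    have \<tau>_img: "\<tau> ` I = I" using \<tau>_bij by (simp add: bij_betw_def)
    have "inversion_sign I (f \<circ> \<tau>) = inversion_sign I \<tau> * inversion_sign I f"
      using inversion_sign_comp[of \<tau> I f] \<tau>_bij f \<tau>_img by (simp add: bij_betw_def)
    also have "inversion_sign I \<tau> = -1"
      unfolding \<tau>_def by (rule inversion_sign_transpose[OF fin ij(1-3)])
    finally have "inversion_sign I (f \<circ> \<tau>) = - inversion_sign I f" by linarith
    moreover have "(\<Prod>x\<in>I. G (g x) ((f \<circ> \<tau>) x)) = (\<Prod>x\<in>I. G (g x) (f x))"
      using prod.reindex_bij_betw[OF \<tau>_bij, of "\<lambda>x. G (g x) (f x)"] by (simp add: g_\<tau>)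
    ultimately show ?thesis by (simp add: comp_def)
  qed
  have "sum ?H (bijections I J) = sum (\<lambda>f. ?H (f \<circ> \<tau>)) (bijections I J)"
    by (rule sum.reindex_bij_witness[of _ "\<lambda>f. f \<circ> \<tau>" "\<lambda>f. f \<circ> \<tau>"])
      (auto simp: mem \<tau>_involution)
  also have "\<dots> = - sum ?H (bijections I J)"
    unfolding sum_negf[symmetric] by (rule sum.cong[OF refl neg])
  finally show ?thesis by simp
qed

lemma bij_betw_bijections_comp:
  assumes inj: "inj_on g I"
  shows "bij_betw (\<lambda>h. restrict (h \<circ> g) I) (bijections (g ` I) J) (bijections I J)"
proof -
  define g' where "g' = the_inv_into I g"
  have g_bij: "bij_betw g I (g ` I)" using inj by (simp add: bij_betw_def)
  have g'_bij: "bij_betw g' (g ` I) I" unfolding g'_def by (rule bij_betw_the_inv_into[OF g_bij])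
  have g'_g: "x \<in> I \<Longrightarrow> g' (g x) = x" for x using inj by (simp add: g'_def the_inv_into_f_f)
  have g_g': "y \<in> g ` I \<Longrightarrow> g (g' y) = y" for y using inj by (simp add: g'_def f_the_inv_into_f)
  have g'_in: "y \<in> g ` I \<Longrightarrow> g' y \<in> I" for y using g'_bij by (auto simp: bij_betw_def)
  have comp_g: "restrict (h \<circ> g) I \<in> bijections I J" if "h \<in> bijections (g ` I) J" for h
  proof -
    have "bij_betw (h \<circ> g) I J" using bij_betw_trans[OF g_bij] that unfolding bijections_def by blast
    then show ?thesis by (simp add: bijections_def bij_betw_def inj_on_def)
  qed
  have comp_g': "restrict (f \<circ> g') (g ` I) \<in> bijections (g ` I) J" if "f \<in> bijections I J" for f
  proof -
    have "bij_betw (f \<circ> g') (g ` I) J" using bij_betw_trans[OF g'_bij] that unfolding bijections_def by blast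
    then show ?thesis by (simp add: bijections_def bij_betw_def inj_on_def)
  qed
  show ?thesis
  proof (rule bij_betw_byWitness[where f' = "\<lambda>f. restrict (f \<circ> g') (g ` I)"])
    show "\<forall>h\<in>bijections (g ` I) J. restrict (restrict (h \<circ> g) I \<circ> g') (g ` I) = h"
    proof
      fix h assume "h \<in> bijections (g ` I) J"
      then show "restrict (restrict (h \<circ> g) I \<circ> g') (g ` I) = h"
        using g'_in g_g' by (auto simp: bijections_def extensional_def fun_eq_iff)
    qed
    show "\<forall>f\<in>bijections I J. restrict (restrict (f \<circ> g') (g ` I) \<circ> g) I = f"
    proof
      fix f assume "f \<in> bijections I J"
      then show "restrict (restrict (f \<circ> g') (g ` I) \<circ> g) I = f"
        using g'_g by (auto simp: bijections_def extensional_def fun_eq_iff)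
    qed
  qed (use comp_g comp_g' in blast)+
qed

lemma sum_bijections_inj_on:
  assumes inj: "inj_on g I"
  shows "(\<Sum>f\<in>bijections I J. inversion_sign I f * (\<Prod>x\<in>I. G (g x) (f x))) =
    inversion_sign I g * leibniz_det G (g ` I) J"
proof -
  have summand: "inversion_sign I (restrict (h \<circ> g) I) * (\<Prod>x\<in>I. G (g x) (restrict (h \<circ> g) I x)) =
      inversion_sign I g * (inversion_sign (g ` I) h * (\<Prod>k\<in>g ` I. G k (h k)))"
    if h: "h \<in> bijections (g ` I) J" for h
  proof -
    have "inversion_sign I (restrict (h \<circ> g) I) = inversion_sign I (h \<circ> g)"
      by (rule inversion_sign_cong) simp
    also have "\<dots> = inversion_sign I g * inversion_sign (g ` I) h"
      using inversion_sign_comp[OF inj] h unfolding bijections_def bij_betw_def by blast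
    finally show ?thesis
      using prod.reindex[OF inj, of "\<lambda>k. G k (h k)"] by simp
  qed
  have "inversion_sign I g * leibniz_det G (g ` I) J =
      (\<Sum>h\<in>bijections (g ` I) J. inversion_sign I (restrict (h \<circ> g) I) *
        (\<Prod>x\<in>I. G (g x) (restrict (h \<circ> g) I x)))"
    unfolding leibniz_det_def sum_distrib_left by (rule sum.cong[OF refl summand[symmetric]])
  also have "\<dots> = (\<Sum>f\<in>bijections I J. inversion_sign I f * (\<Prod>x\<in>I. G (g x) (f x)))"
    by (rule sum.reindex_bij_betw[OF bij_betw_bijections_comp[OF inj]])
  finally show ?thesis ..
qed

lemma cauchy_binet_leibniz_det:
  fixes F :: "'a::linorder \<Rightarrow> 'c::{finite,linorder} \<Rightarrow> real" and G :: "'c \<Rightarrow> 'b::linorder \<Rightarrow> real"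
  assumes fin: "finite I"
  shows "leibniz_det (\<lambda>i j. \<Sum>l\<in>UNIV. F i l * G l j) I J =
    (\<Sum>K\<in>{K. card K = card I}. leibniz_det F I K * leibniz_det G K J)"
proof -
  let ?P = "PiE I (\<lambda>_. UNIV :: 'c set)"
  let ?W = "\<lambda>g. \<Sum>f\<in>bijections I J. inversion_sign I f * (\<Prod>x\<in>I. G (g x) (f x))"
  have fin_P: "finite ?P" by (simp add: finite_PiE fin)
  have "leibniz_det (\<lambda>i j. \<Sum>l\<in>UNIV. F i l * G l j) I J =
      (\<Sum>f\<in>bijections I J. inversion_sign I f * (\<Sum>g\<in>?P. \<Prod>x\<in>I. F x (g x) * G (g x) (f x)))"
    unfolding leibniz_det_def
    by (intro sum.cong refl arg_cong2[where f = "(*)"] prod_sum_PiE) (auto simp: fin)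
  also have "\<dots> = (\<Sum>f\<in>bijections I J. \<Sum>g\<in>?P.
      (\<Prod>x\<in>I. F x (g x)) * (inversion_sign I f * (\<Prod>x\<in>I. G (g x) (f x))))"
    by (simp add: sum_distrib_left prod.distrib mult_ac)
  also have "\<dots> = (\<Sum>g\<in>?P. (\<Prod>x\<in>I. F x (g x)) * ?W g)"
    by (subst sum.swap) (simp add: sum_distrib_left)
  also have "\<dots> = (\<Sum>g\<in>?P. if inj_on g I
      then (\<Prod>x\<in>I. F x (g x)) * (inversion_sign I g * leibniz_det G (g ` I) J) else 0)"
    by (intro sum.cong refl) (simp add: sum_bijections_inj_on sum_bijections_not_inj_on[OF fin])
  also have "\<dots> = (\<Sum>g\<in>{g \<in> ?P. inj_on g I}.
      (\<Prod>x\<in>I. F x (g x)) * (inversion_sign I g * leibniz_det G (g ` I) J))"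
    by (rule sum.inter_filter[OF fin_P, symmetric])
  also have "\<dots> = (\<Sum>K\<in>{K. card K = card I}. \<Sum>g\<in>{g \<in> {g \<in> ?P. inj_on g I}. g ` I = K}.
      (\<Prod>x\<in>I. F x (g x)) * (inversion_sign I g * leibniz_det G (g ` I) J))"
    by (rule sum.group[symmetric]) (use fin_P in \<open>auto simp: card_image\<close>)
  also have "\<dots> = (\<Sum>K\<in>{K. card K = card I}. leibniz_det F I K * leibniz_det G K J)"
  proof (rule sum.cong[OF refl])
    fix K :: "'c set"
    have "{g \<in> {g \<in> ?P. inj_on g I}. g ` I = K} = bijections I K"
      by (auto simp: bijections_def bij_betw_def PiE_def extensional_def)
    then have "(\<Sum>g\<in>{g \<in> {g \<in> ?P. inj_on g I}. g ` I = K}.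
        (\<Prod>x\<in>I. F x (g x)) * (inversion_sign I g * leibniz_det G (g ` I) J)) =
        (\<Sum>g\<in>bijections I K. (inversion_sign I g * (\<Prod>x\<in>I. F x (g x))) * leibniz_det G K J)"
      by (intro sum.cong) (auto simp: bijections_def bij_betw_def)
    also have "\<dots> = leibniz_det F I K * leibniz_det G K J"
      by (simp add: leibniz_det_def sum_distrib_right)
    finally show "(\<Sum>g\<in>{g \<in> {g \<in> ?P. inj_on g I}. g ` I = K}.
        (\<Prod>x\<in>I. F x (g x)) * (inversion_sign I g * leibniz_det G (g ` I) J)) =
        leibniz_det F I K * leibniz_det G K J" .
  qed
  finally show ?thesis .
qed

section \<open>Minors of random matrices\<close>

lemma leibniz_det_singleton: "leibniz_det F {i} {j} = F i j"
proof -
  have "bijections {i} {j} = {\<lambda>x. if x = i then j else undefined}"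
    by (auto simp: bijections_def extensional_def fun_eq_iff)
  moreover have "inversion_sign {i} f = 1" for f :: "'a \<Rightarrow> 'b"
    by (rule inversion_sign_strict_mono) auto
  ultimately show ?thesis by (simp add: leibniz_det_def)
qed

lemma minor_det_singleton: "minor_det (X::real^'d::{finite,linorder}^'d::{finite,linorder}) {i} {j} = X $ i $ j"
  by (simp add: minor_det_eq_leibniz_det leibniz_det_singleton)

lemma borel_measurable_minor_det:
  "(\<lambda>X::real^'d::{finite,linorder}^'d::{finite,linorder}. minor_det X I J) \<in> borel_measurable borel"
  unfolding minor_det_def Let_def by (intro borel_measurable_continuous_onI continuous_intros)

lemma borel_measurable_matrix_entry: "(\<lambda>X::real^'n^'m. X $ i $ j) \<in> borel_measurable borel"
  by (intro borel_measurable_continuous_onI continuous_intros)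

definition block_splittings :: "'a set \<Rightarrow> 'b set \<Rightarrow> ('a set \<times> 'b set) set" where
  "block_splittings I J = Sigma (Pow I) (\<lambda>S. {T. T \<subseteq> J \<and> card T = card S})"

lemma card_block_splittings:
  assumes "finite I" "finite J" "card I = card J" "(S, T) \<in> block_splittings I J"
  shows "card S = card T" "card (I - S) = card (J - T)"
  using assms by (auto simp: block_splittings_def card_Diff_subset finite_subset)

lemma minor_det_add:
  fixes X Y :: "real^'d::{finite,linorder}^'d::{finite,linorder}"
  assumes c: "card I = card J"
  shows "minor_det (X + Y) I J = (\<Sum>(S, T)\<in>block_splittings I J.
    split_sign I S * split_sign J T * (minor_det X S T * minor_det Y (I - S) (J - T)))"
proof -
  have "minor_det (X + Y) I J = leibniz_det (\<lambda>i j. X $ i $ j + Y $ i $ j) I J"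
    by (simp add: minor_det_eq_leibniz_det[OF c])
  also have "\<dots> = (\<Sum>(S, T)\<in>block_splittings I J. split_sign I S * split_sign J T *
      leibniz_det (\<lambda>i j. X $ i $ j) S T * leibniz_det (\<lambda>i j. Y $ i $ j) (I - S) (J - T))"
    unfolding leibniz_det_add[OF finite finite] block_splittings_def by (simp add: sum.Sigma)
  also have "\<dots> = (\<Sum>(S, T)\<in>block_splittings I J.
      split_sign I S * split_sign J T * (minor_det X S T * minor_det Y (I - S) (J - T)))"
    using card_block_splittings[OF finite finite c]
    by (intro sum.cong refl) (auto simp: minor_det_eq_leibniz_det)
  finally show ?thesis .
qed

lemma minor_det_mult:
  fixes X Y :: "real^'d::{finite,linorder}^'d::{finite,linorder}"
  assumes c: "card I = card J"
  shows "minor_det (X ** Y) I J = (\<Sum>K\<in>{K. card K = card I}. minor_det X I K * minor_det Y K J)"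
proof -
  have "minor_det (X ** Y) I J = leibniz_det (\<lambda>i j. \<Sum>l\<in>UNIV. X $ i $ l * Y $ l $ j) I J"
    by (simp add: minor_det_eq_leibniz_det[OF c] matrix_matrix_mult_def)
  also have "\<dots> = (\<Sum>K\<in>{K. card K = card I}. minor_det X I K * minor_det Y K J)"
    by (simp add: cauchy_binet_leibniz_det minor_det_eq_leibniz_det c)
  finally show ?thesis .
qed

lemma det_preserving_integrable_entry:
  assumes "det_preserving M A"
  shows "integrable M (\<lambda>\<omega>. A \<omega> $ i $ j)"
  using assms[unfolded det_preserving_def, rule_format, of "{i}" "{j}"] by (simp add: minor_det_singleton)

lemma mat_expectation_add:
  assumes "\<And>i j. integrable M (\<lambda>\<omega>. A \<omega> $ i $ j)" "\<And>i j. integrable M (\<lambda>\<omega>. B \<omega> $ i $ j)"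
  shows "mat_expectation M (\<lambda>\<omega>. A \<omega> + B \<omega>) = mat_expectation M A + mat_expectation M B"
  using assms by (simp add: mat_expectation_def vec_eq_iff)

lemma (in prob_space) indep_var_integral_compose_mult:
  fixes A B :: "'a \<Rightarrow> 'v::topological_space" and F G :: "'v \<Rightarrow> real"
  assumes ind: "indep_var borel A borel B"
    and F: "F \<in> borel_measurable borel" and G: "G \<in> borel_measurable borel"
    and int_F: "integrable M (\<lambda>\<omega>. F (A \<omega>))" and int_G: "integrable M (\<lambda>\<omega>. G (B \<omega>))"
  shows "integrable M (\<lambda>\<omega>. F (A \<omega>) * G (B \<omega>))"
    and "(\<integral>\<omega>. F (A \<omega>) * G (B \<omega>) \<partial>M) = (\<integral>\<omega>. F (A \<omega>) \<partial>M) * (\<integral>\<omega>. G (B \<omega>) \<partial>M)"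
proof -
  have "indep_var borel (\<lambda>\<omega>. F (A \<omega>)) borel (\<lambda>\<omega>. G (B \<omega>))"
    using indep_var_compose[OF ind F G] by (simp add: comp_def)
  then show "integrable M (\<lambda>\<omega>. F (A \<omega>) * G (B \<omega>))"
    and "(\<integral>\<omega>. F (A \<omega>) * G (B \<omega>) \<partial>M) = (\<integral>\<omega>. F (A \<omega>) \<partial>M) * (\<integral>\<omega>. G (B \<omega>) \<partial>M)"
    using indep_var_integrable indep_var_lebesgue_integral int_F int_G by blast+
qed

lemma (in prob_space) mat_expectation_mult:
  assumes ind: "indep_var borel A borel B"
    and "\<And>i j. integrable M (\<lambda>\<omega>. A \<omega> $ i $ j)" "\<And>i j. integrable M (\<lambda>\<omega>. B \<omega> $ i $ j)"
  shows "mat_expectation M (\<lambda>\<omega>. A \<omega> ** B \<omega>) = mat_expectation M A ** mat_expectation M B"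
proof -
  note entry_mult = indep_var_integral_compose_mult[OF ind borel_measurable_matrix_entry
      borel_measurable_matrix_entry assms(2,3)]
  show ?thesis
    unfolding mat_expectation_def matrix_matrix_mult_def
    by (simp add: vec_eq_iff entry_mult)
qed

lemma (in prob_space) integral_minor_det_mult_indep:
  assumes ind: "indep_var borel A borel B" and A: "det_preserving M A" and B: "det_preserving M B"
    and c: "card I = card J" "card K = card L"
  shows "integrable M (\<lambda>\<omega>. minor_det (A \<omega>) I J * minor_det (B \<omega>) K L)"
    and "(\<integral>\<omega>. minor_det (A \<omega>) I J * minor_det (B \<omega>) K L \<partial>M) =
      minor_det (mat_expectation M A) I J * minor_det (mat_expectation M B) K L"
  using indep_var_integral_compose_mult[OF ind borel_measurable_minor_det borel_measurable_minor_det]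
    A B c unfolding det_preserving_def by auto

lemma integrable_integral_sum:
  assumes "\<And>i. i \<in> S \<Longrightarrow> integrable M (f i) \<and> integral\<^sup>L M (f i) = c i"
  shows "integrable M (\<lambda>\<omega>. \<Sum>i\<in>S. f i \<omega>) \<and> (\<integral>\<omega>. (\<Sum>i\<in>S. f i \<omega>) \<partial>M) = (\<Sum>i\<in>S. c i)"
  using assms by (simp add: Bochner_Integration.integrable_sum Bochner_Integration.integral_sum)

lemma (in prob_space) det_preserving_add:
  fixes A B :: "'a \<Rightarrow> real^'d::{finite,linorder}^'d::{finite,linorder}"
  assumes ind: "indep_var borel A borel B" and A: "det_preserving M A" and B: "det_preserving M B"
  shows "det_preserving M (\<lambda>\<omega>. A \<omega> + B \<omega>)"
  unfolding det_preserving_def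
proof (intro allI impI)
  fix I J :: "'d set" assume c: "card I = card J"
  define term_of where "term_of X Y = (\<lambda>(S, T). split_sign I S * split_sign J T *
    (minor_det X S T * minor_det Y (I - S) (J - T)))" for X Y
  have summand: "integrable M (\<lambda>\<omega>. term_of (A \<omega>) (B \<omega>) q) \<and>
      (\<integral>\<omega>. term_of (A \<omega>) (B \<omega>) q \<partial>M) = term_of (mat_expectation M A) (mat_expectation M B) q"
    if "q \<in> block_splittings I J" for q
    using that card_block_splittings[OF finite finite c, of "fst q" "snd q"]
      integral_minor_det_mult_indep[OF ind A B]
    by (auto simp: term_of_def case_prod_beta)
  have expectation: "mat_expectation M (\<lambda>\<omega>. A \<omega> + B \<omega>) = mat_expectation M A + mat_expectation M B"
    by (intro mat_expectation_add det_preserving_integrable_entry A B)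
  show "integrable M (\<lambda>\<omega>. minor_det (A \<omega> + B \<omega>) I J) \<and>
      (\<integral>\<omega>. minor_det (A \<omega> + B \<omega>) I J \<partial>M) = minor_det (mat_expectation M (\<lambda>\<omega>. A \<omega> + B \<omega>)) I J"
    unfolding expectation minor_det_add[OF c] term_of_def[symmetric]
    by (rule integrable_integral_sum) (use summand in blast)
qed

lemma (in prob_space) det_preserving_mult:
  fixes A B :: "'a \<Rightarrow> real^'d::{finite,linorder}^'d::{finite,linorder}"
  assumes ind: "indep_var borel A borel B" and A: "det_preserving M A" and B: "det_preserving M B"
  shows "det_preserving M (\<lambda>\<omega>. A \<omega> ** B \<omega>)"
  unfolding det_preserving_def
proof (intro allI impI)
  fix I J :: "'d set" assume c: "card I = card J"
  have summand: "integrable M (\<lambda>\<omega>. minor_det (A \<omega>) I K * minor_det (B \<omega>) K J) \<and>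
      (\<integral>\<omega>. minor_det (A \<omega>) I K * minor_det (B \<omega>) K J \<partial>M) =
      minor_det (mat_expectation M A) I K * minor_det (mat_expectation M B) K J"
    if "K \<in> {K. card K = card I}" for K
    using that c integral_minor_det_mult_indep[OF ind A B] by auto
  have expectation: "mat_expectation M (\<lambda>\<omega>. A \<omega> ** B \<omega>) = mat_expectation M A ** mat_expectation M B"
    by (intro mat_expectation_mult ind det_preserving_integrable_entry A B)
  show "integrable M (\<lambda>\<omega>. minor_det (A \<omega> ** B \<omega>) I J) \<and>
      (\<integral>\<omega>. minor_det (A \<omega> ** B \<omega>) I J \<partial>M) = minor_det (mat_expectation M (\<lambda>\<omega>. A \<omega> ** B \<omega>)) I J"
    unfolding expectation minor_det_mult[OF c]
    by (rule integrable_integral_sum) (use summand in blast)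
qed

theorem lemma4:
  fixes M :: "'w measure"
    and A B :: "'w \<Rightarrow> real^'d::{finite,linorder}^'d::{finite,linorder}"
  assumes "prob_space M"
    and "A \<in> borel_measurable M" and "B \<in> borel_measurable M"
    and "prob_space.indep_var M borel A borel B"
    and "det_preserving M A" and "det_preserving M B"
  shows "det_preserving M (\<lambda>\<omega>. A \<omega> + B \<omega>) \<and>
         det_preserving M (\<lambda>\<omega>. A \<omega> ** B \<omega>)"
proof -
  interpret prob_space M by fact
  show ?thesis
    using assms(4-6) det_preserving_add det_preserving_mult by blast
qed

end
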